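(* Let $a,\Theta\in l_0(\mathbb{Z})$ be such that $\Theta^\star=\Theta$, let $n_b$ be a positive integer with $n_b\le\min\{\mathrm{sr}(a),\tfrac12\mathrm{vm}(\mathsf{\Theta}(z)-\mathsf{\Theta}(z^2)\mathsf{a}^\star(z)\mathsf{a}(z))\}$, and let $b=(b_1,b_2)^\top\in (l_0(\mathbb{Z}))^{2\times 1}$. Suppose that $\{a;b_1,b_2\}_{\Theta,(1,-1)}$ is a quasi-tight framelet filter bank such that $\min\{\mathrm{vm}(b_1),\mathrm{vm}(b_2)\}\ge n_b$. Then $$\mathcal{N}_{\mathsf{a},\mathsf{\Theta}|n_b}(z)=\begin{bmatrix}\mathring{\mathsf{b}}^{[0]}(z)&\mathring{\mathsf{b}}^{[1]}(z)\end{bmatrix}^\star\mathrm{diag}(1,-1)\begin{bmatrix}\mathring{\mathsf{b}}^{[0]}(z)&\mathring{\mathsf{b}}^{[1]}(z)\end{bmatrix}$$ holds, where $\mathring{b}\in (l_0(\mathbb{Z}))^{2\times1}$ satisfies $\mathsf{b}(z)=(1-z)^{n_b}\mathring{\mathsf{b}}(z)$. Conversely, suppose that there exists a matrix of Laurent polynomials $\mathsf{V}=\begin{bmatrix}\mathsf{V}_{1,1} &\mathsf{V}_{1,2}\\ \mathsf{V}_{2,1} &\mathsf{V}_{2,2}\end{bmatrix}$ such that $\mathcal{N}_{\mathsf{a},\mathsf{\Theta}|n_b}=\mathsf{V}^{\star}\mathrm{diag}(1,-1)\mathsf{V}$. Define $\mathring{b}$ through $\mathring{\mathsf{b}}^{[0]}:=(\mathsf{V}_{1,1},\mathsf{V}_{2,1})^\top$,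 $\mathring{\mathsf{b}}^{[1]}:=(\mathsf{V}_{1,2},\mathsf{V}_{2,2})^\top$ (i.e. $\mathring{\mathsf{b}}(z)=\mathring{\mathsf{b}}^{[0]}(z^2)+z\mathring{\mathsf{b}}^{[1]}(z^2)$), and define $b$ by $\mathsf{b}(z):=(1-z)^{n_b}\mathring{\mathsf{b}}(z)$. Then $\{a;b_1,b_2\}_{\Theta,(1,-1)}$ is a quasi-tight framelet filter bank such that $\min\{\mathrm{vm}(b_1),\mathrm{vm}(b_2)\}\ge n_b$.
   Context: For a finitely supported filter $u$, $\mathsf{u}(z)=\sum_k u(k)z^k$, $\mathsf{u}^\star(z)=\sum_k\overline{u(k)}^{\top}z^{-k}$, and $u^\star=\overline{u(-\cdot)}^\top$. $\mathrm{vm}(b)$ is the largest $m$ with $(z-1)^m\mid\mathsf{b}(z)$; $\mathrm{sr}(a)$ is the largest $n$ with $(z+1)^n\mid\mathsf{a}(z)$. $\{a;b_1,b_2\}_{\Theta,(1,-1)}$ is a quasi-tight framelet filter bank if for all $z\in\mathbb{C}\setminus\{0\}$: $\mathsf{\Theta}(z^2)\mathsf{a}^\star(z)\mathsf{a}(z)+\mathsf{b}_1^\star(z)\mathsf{b}_1(z)-\mathsf{b}_2^\star(z)\mathsf{b}_2(z)=\mathsf{\Theta}(z)$ and $\mathsf{\Theta}(z^2)\mathsf{a}^\star(z)\mathsf{a}(-z)+\mathsf{b}_1^\star(z)\mathsf{b}_1(-z)-\mathsf{b}_2^\star(z)\mathsf{b}_2(-z)=0$. The $\gamma$-coset sequence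 of $u$ is $u^{[\gamma]}(k)=u(\gamma+2k)$, so $\mathsf{u}(z)=\mathsf{u}^{[0]}(z^2)+z\mathsf{u}^{[1]}(z^2)$. Define the Laurent polynomials $\mathsf{A}(z):=\frac{\mathsf{\Theta}(z)-\mathsf{\Theta}(z^2)\mathsf{a}^\star(z)\mathsf{a}(z)}{(1-z)^{n_b}(1-z^{-1})^{n_b}}$ and $\mathsf{B}(z):=\frac{-\mathsf{\Theta}(z^2)\mathsf{a}^\star(z)\mathsf{a}(-z)}{(1-z^{-1})^{n_b}(1+z)^{n_b}}$, and $$\mathcal{N}_{\mathsf{a},\mathsf{\Theta}|n_b}(z):=\frac12\begin{bmatrix}\mathsf{A}^{[0]}(z)+\mathsf{B}^{[0]}(z)&\mathsf{A}^{[1]}(z)-\mathsf{B}^{[1]}(z)\\ z(\mathsf{A}^{[1]}(z)+\mathsf{B}^{[1]}(z))&\mathsf{A}^{[0]}(z)-\mathsf{B}^{[0]}(z)\end{bmatrix}.$$ *)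

theory Defs
  imports Complex_Main "HOL-Library.Extended_Nat"
begin

type_synonym filt = "int \<Rightarrow> complex"

definition l0 :: "filt \<Rightarrow> bool" where
  "l0 u \<longleftrightarrow> finite {k. u k \<noteq> 0}"

definition symb :: "filt \<Rightarrow> complex \<Rightarrow> complex" where
  "symb u z = (\<Sum>k\<in>{k. u k \<noteq> 0}. u k * z powi k)"

text \<open>u^star = conj(u(-.)) (scalar case, transpose trivial); its symbol is u^star(z).\<close>
definition fstar :: "filt \<Rightarrow> filt" where
  "fstar u = (\<lambda>k. cnj (u (- k)))"

definition coset :: "filt \<Rightarrow> int \<Rightarrow> filt" where
  "coset u \<gamma> = (\<lambda>k. u (\<gamma> + 2 * k))"

definition ldvd_pow :: "complex \<Rightarrow> nat \<Rightarrow> (complex \<Rightarrow> complex) \<Rightarrow> bool" where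
  "ldvd_pow c m f \<longleftrightarrow> (\<exists>q. l0 q \<and> (\<forall>z. z \<noteq> 0 \<longrightarrow> f z = (z - c) ^ m * symb q z))"

text \<open>vm and sr of a Laurent polynomial (value infinity for the zero polynomial).\<close>
definition vm :: "(complex \<Rightarrow> complex) \<Rightarrow> enat" where
  "vm f = (SUP m \<in> {m. ldvd_pow 1 m f}. enat m)"

definition sr :: "(complex \<Rightarrow> complex) \<Rightarrow> enat" where
  "sr f = (SUP m \<in> {m. ldvd_pow (-1) m f}. enat m)"

definition lquot :: "(complex \<Rightarrow> complex) \<Rightarrow> (complex \<Rightarrow> complex) \<Rightarrow> filt" where
  "lquot N d = (THE q. l0 q \<and> (\<forall>z. z \<noteq> 0 \<longrightarrow> N z = d z * symb q z))"

definition Afilt :: "filt \<Rightarrow> filt \<Rightarrow> nat \<Rightarrow> filt" where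
  "Afilt a \<Theta> nb = lquot
     (\<lambda>z. symb \<Theta> z - symb \<Theta> (z^2) * symb (fstar a) z * symb a z)
     (\<lambda>z. (1 - z) ^ nb * (1 - inverse z) ^ nb)"

definition Bfilt :: "filt \<Rightarrow> filt \<Rightarrow> nat \<Rightarrow> filt" where
  "Bfilt a \<Theta> nb = lquot
     (\<lambda>z. - symb \<Theta> (z^2) * symb (fstar a) z * symb a (- z))
     (\<lambda>z. (1 - inverse z) ^ nb * (1 + z) ^ nb)"

definition Nmat :: "filt \<Rightarrow> filt \<Rightarrow> nat \<Rightarrow> nat \<Rightarrow> nat \<Rightarrow> complex \<Rightarrow> complex" where
  "Nmat a \<Theta> nb i j z =
     (let A = Afilt a \<Theta> nb; B = Bfilt a \<Theta> nb in
      if i = 1 \<and> j = 1 then (symb (coset A 0) z + symb (coset B 0) z) / 2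
      else if i = 1 \<and> j = 2 then (symb (coset A 1) z - symb (coset B 1) z) / 2
      else if i = 2 \<and> j = 1 then z * (symb (coset A 1) z + symb (coset B 1) z) / 2
      else (symb (coset A 0) z - symb (coset B 0) z) / 2)"

definition N_factor :: "filt \<Rightarrow> filt \<Rightarrow> nat \<Rightarrow> (nat \<Rightarrow> nat \<Rightarrow> filt) \<Rightarrow> bool" where
  "N_factor a \<Theta> nb V \<longleftrightarrow>
     (\<forall>z. z \<noteq> 0 \<longrightarrow> (\<forall>i\<in>{1,2}. \<forall>j\<in>{1,2}.
        Nmat a \<Theta> nb i j z =
          symb (fstar (V 1 i)) z * symb (V 1 j) z - symb (fstar (V 2 i)) z * symb (V 2 j) z))"

definition qtfb :: "filt \<Rightarrow> filt \<Rightarrow> filt \<Rightarrow> filt \<Rightarrow> bool" where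
  "qtfb \<Theta> a b1 b2 \<longleftrightarrow> (\<forall>z. z \<noteq> 0 \<longrightarrow>
     symb \<Theta> (z^2) * symb (fstar a) z * symb a z + symb (fstar b1) z * symb b1 z
       - symb (fstar b2) z * symb b2 z = symb \<Theta> z
   \<and> symb \<Theta> (z^2) * symb (fstar a) z * symb a (- z) + symb (fstar b1) z * symb b1 (- z)
       - symb (fstar b2) z * symb b2 (- z) = 0)"

definition interleave :: "filt \<Rightarrow> filt \<Rightarrow> filt" where
  "interleave u0 u1 = (\<lambda>k. if even k then u0 (k div 2) else u1 (k div 2))"

end

theory Submission
  imports Defs "HOL-Computational_Algebra.Polynomial"
begin

text \<open>
  Write b = (1 - z)^nb bo. The two quasi-tight identities then say exactly that
  A(z) = bo*(z) diag(1,-1) bo(z) and B(z) = bo*(z) diag(1,-1) bo(-z), where A and B are the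
  quotients in the definition of N; these are Laurent polynomials (because b factors, or by the
  sum-rule and vanishing-moment hypotheses) and are uniquely determined, since Laurent polynomials
  agreeing off a finite set coincide. In polyphase form u(+-z) = u0(z^2) +- z u1(z^2), with u0, u1
  the coset sequences of u, the identities for A(+-z) and B(+-z) are an invertible linear
  recombination of the four entries of N(z^2) = V*(z^2) diag(1,-1) V(z^2) with V = [bo0 bo1].
\<close>

lemma symb_eq_sum_superset:
  assumes "finite S" "{k. u k \<noteq> 0} \<subseteq> S"
  shows "symb u z = (\<Sum>k\<in>S. u k * z powi k)"
  unfolding symb_def by (rule sum.mono_neutral_left[OF assms]) auto

lemma l0_diff: "l0 q \<Longrightarrow> l0 r \<Longrightarrow> l0 (\<lambda>k. q k - r k)"
  unfolding l0_def by (rule finite_subset[of _ "{k. q k \<noteq> 0} \<union> {k. r k \<noteq> 0}"]) auto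

lemma symb_diff:
  assumes "l0 q" "l0 r"
  shows "symb (\<lambda>k. q k - r k) z = symb q z - symb r z"
proof -
  let ?S = "{k. q k \<noteq> 0} \<union> {k. r k \<noteq> 0}"
  have "finite ?S" using assms unfolding l0_def by simp
  then show ?thesis
    by (subst (1 2 3) symb_eq_sum_superset[of ?S]) (auto simp: algebra_simps sum_subtractf)
qed

lemma l0_bounded:
  assumes "l0 q"
  obtains M :: nat where "\<And>k. q k \<noteq> 0 \<Longrightarrow> \<bar>k\<bar> \<le> int M"
proof -
  have "finite ((\<lambda>k. nat \<bar>k\<bar>) ` {k. q k \<noteq> 0})"
    using assms unfolding l0_def by simp
  then obtain M where "\<forall>n\<in>(\<lambda>k. nat \<bar>k\<bar>) ` {k. q k \<noteq> 0}. n \<le> M"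
    using finite_nat_set_iff_bounded_le by blast
  then show ?thesis
    by (intro that[of M]) fastforce
qed

lemma sum_shift_interval:
  "(\<Sum>k\<in>{-int M..int D - int M}. g k) = (\<Sum>i\<le>D. g (int i - int M))"
  by (rule sum.reindex_bij_witness[where i="\<lambda>i. int i - int M" and j="\<lambda>k. nat (k + int M)"]) auto

lemma symb_eq_poly_div:
  assumes M: "\<And>k. q k \<noteq> 0 \<Longrightarrow> \<bar>k\<bar> \<le> int M" and z: "z \<noteq> 0"
  shows "symb q z = poly (\<Sum>i\<le>2*M. monom (q (int i - int M)) i) z / z ^ M"
proof -
  have "symb q z = (\<Sum>k\<in>{-int M..int (2*M) - int M}. q k * z powi k)"
    by (rule symb_eq_sum_superset) (use M in force)+
  also have "\<dots> = (\<Sum>i\<le>2*M. q (int i - int M) * z powi (int i - int M))"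
    by (rule sum_shift_interval)
  also have "\<dots> = (\<Sum>i\<le>2*M. q (int i - int M) * z ^ i) / z ^ M"
    by (simp add: power_int_diff z sum_divide_distrib)
  finally show ?thesis
    by (simp add: poly_sum poly_monom)
qed

lemma symb_coeff_shift:
  fixes p :: "complex poly" and n :: nat
  defines "q \<equiv> \<lambda>k. if 0 \<le> k + int n then coeff p (nat (k + int n)) else 0"
  shows "l0 q" and "z \<noteq> 0 \<Longrightarrow> symb q z = poly p z / z ^ n"
proof -
  have S: "{k. q k \<noteq> 0} \<subseteq> {-int n..int (degree p) - int n}"
    using le_degree by (fastforce simp: q_def split: if_splits)
  then show "l0 q"
    unfolding l0_def using finite_subset by blast
  assume z: "z \<noteq> 0"
  have "symb q z = (\<Sum>i\<le>degree p. q (int i - int n) * z powi (int i - int n))"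
    by (simp add: symb_eq_sum_superset[OF _ S] sum_shift_interval)
  also have "\<dots> = (\<Sum>i\<le>degree p. coeff p i * z ^ i) / z ^ n"
    by (simp add: q_def power_int_diff z sum_divide_distrib)
  finally show "symb q z = poly p z / z ^ n"
    by (simp add: poly_altdef)
qed

lemma symb_eq_zero_cofinite:
  assumes "l0 q" "finite F" "\<And>z. z \<noteq> 0 \<Longrightarrow> z \<notin> F \<Longrightarrow> symb q z = 0"
  shows "q k = 0"
proof -
  obtain M where M: "\<And>k. q k \<noteq> 0 \<Longrightarrow> \<bar>k\<bar> \<le> int M"
    using l0_bounded[OF assms(1)] by blast
  define p where "p = (\<Sum>i\<le>2*M. monom (q (int i - int M)) i)"
  have "- insert 0 F \<subseteq> {x. poly p x = 0}"
    using assms(3) symb_eq_poly_div[OF M] unfolding p_def by auto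
  moreover have "infinite (- insert 0 F)"
    using assms(2) by (simp add: Compl_eq_Diff_UNIV infinite_UNIV_char_0 Diff_infinite_finite)
  ultimately have "p = 0"
    using poly_roots_finite finite_subset by blast
  show ?thesis
  proof (rule ccontr)
    assume "q k \<noteq> 0"
    then have "coeff p (nat (k + int M)) = q k"
      using M[of k] unfolding p_def coeff_sum coeff_monom by (auto simp: nat_le_iff)
    with \<open>p = 0\<close> \<open>q k \<noteq> 0\<close> show False by simp
  qed
qed

lemma symb_inject_cofinite:
  assumes "l0 q" "l0 r" "finite F" "\<And>z. z \<noteq> 0 \<Longrightarrow> z \<notin> F \<Longrightarrow> symb q z = symb r z"
  shows "q = r"
proof
  fix k
  show "q k = r k"
    using symb_eq_zero_cofinite[OF l0_diff[OF assms(1,2)] assms(3)] assms(4)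
    by (simp add: symb_diff[OF assms(1,2)])
qed

definition laurent :: "(complex \<Rightarrow> complex) \<Rightarrow> bool" where
  "laurent f \<longleftrightarrow> (\<exists>q. l0 q \<and> (\<forall>z. z \<noteq> 0 \<longrightarrow> f z = symb q z))"

lemma laurent_symb: "l0 q \<Longrightarrow> laurent (\<lambda>z. symb q z)"
  unfolding laurent_def by blast

lemma laurent_iff_poly_div:
  "laurent f \<longleftrightarrow> (\<exists>p n. \<forall>z. z \<noteq> 0 \<longrightarrow> f z = poly p z / z ^ n)"
proof
  assume "laurent f"
  then obtain q where "l0 q" and f: "\<forall>z. z \<noteq> 0 \<longrightarrow> f z = symb q z"
    unfolding laurent_def by blast
  obtain M where "\<And>k. q k \<noteq> 0 \<Longrightarrow> \<bar>k\<bar> \<le> int M"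
    using l0_bounded[OF \<open>l0 q\<close>] by blast
  then show "\<exists>p n. \<forall>z. z \<noteq> 0 \<longrightarrow> f z = poly p z / z ^ n"
    by (intro exI[of _ "\<Sum>i\<le>2*M. monom (q (int i - int M)) i"] exI[of _ M])
      (simp add: f symb_eq_poly_div)
next
  assume "\<exists>p n. \<forall>z. z \<noteq> 0 \<longrightarrow> f z = poly p z / z ^ n"
  then obtain p n where "\<forall>z. z \<noteq> 0 \<longrightarrow> f z = poly p z / z ^ n"
    by blast
  with symb_coeff_shift[where p = p and n = n] show "laurent f"
    unfolding laurent_def by auto
qed

lemma laurent_const: "laurent (\<lambda>z. c)"
  unfolding laurent_iff_poly_div by (intro exI[of _ "[:c:]"] exI[of _ 0]) simp

lemma laurent_ident: "laurent (\<lambda>z. z)"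
  unfolding laurent_iff_poly_div by (intro exI[of _ "[:0, 1:]"] exI[of _ 0]) simp

lemma laurent_mult: "laurent f \<Longrightarrow> laurent g \<Longrightarrow> laurent (\<lambda>z. f z * g z)"
  unfolding laurent_iff_poly_div
proof (elim exE)
  fix p n q m
  assume "\<forall>z. z \<noteq> 0 \<longrightarrow> f z = poly p z / z ^ n" "\<forall>z. z \<noteq> 0 \<longrightarrow> g z = poly q z / z ^ m"
  then show "\<exists>p n. \<forall>z. z \<noteq> 0 \<longrightarrow> f z * g z = poly p z / z ^ n"
    by (intro exI[of _ "p * q"] exI[of _ "n + m"]) (simp add: power_add)
qed

lemma laurent_add: "laurent f \<Longrightarrow> laurent g \<Longrightarrow> laurent (\<lambda>z. f z + g z)"
  unfolding laurent_iff_poly_div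
proof (elim exE)
  fix p n q m
  assume "\<forall>z. z \<noteq> 0 \<longrightarrow> f z = poly p z / z ^ n" "\<forall>z. z \<noteq> 0 \<longrightarrow> g z = poly q z / z ^ m"
  then show "\<exists>p n. \<forall>z. z \<noteq> 0 \<longrightarrow> f z + g z = poly p z / z ^ n"
    by (intro exI[of _ "p * monom 1 m + q * monom 1 n"] exI[of _ "n + m"])
      (simp add: power_add poly_monom add_frac_eq)
qed

lemma laurent_uminus: "laurent f \<Longrightarrow> laurent (\<lambda>z. - f z)"
  using laurent_mult[OF laurent_const[of "-1"]] by simp

lemma laurent_diff: "laurent f \<Longrightarrow> laurent g \<Longrightarrow> laurent (\<lambda>z. f z - g z)"
  using laurent_add[OF _ laurent_uminus, of f g] by simp

lemma laurent_power: "laurent f \<Longrightarrow> laurent (\<lambda>z. f z ^ k)"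
proof (induction k)
  case 0
  then show ?case using laurent_const[of 1] by simp
next
  case (Suc k)
  then show ?case using laurent_mult[of f "\<lambda>z. f z ^ k"] by simp
qed

lemma laurent_compose_monom:
  assumes "laurent f" "c \<noteq> 0"
  shows "laurent (\<lambda>z. f (c * z ^ k))"
proof -
  obtain p n where f: "\<forall>z. z \<noteq> 0 \<longrightarrow> f z = poly p z / z ^ n"
    using assms(1) unfolding laurent_iff_poly_div by blast
  have "f (c * z ^ k) = poly (smult (inverse (c ^ n)) (p \<circ>\<^sub>p monom c k)) z / z ^ (k * n)"
    if "z \<noteq> 0" for z
  proof -
    have "f (c * z ^ k) = poly p (c * z ^ k) / (c ^ n * z ^ (k * n))"
      using f that assms(2) by (simp add: power_mult_distrib power_mult)
    also have "\<dots> = inverse (c ^ n) * poly p (c * z ^ k) / z ^ (k * n)"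
      using assms(2) by (simp add: divide_inverse)
    finally show ?thesis
      by (simp add: poly_pcompose poly_monom)
  qed
  then show ?thesis
    unfolding laurent_iff_poly_div by blast
qed

lemma laurent_symb_square: "l0 q \<Longrightarrow> laurent (\<lambda>z. symb q (z ^ 2))"
  using laurent_compose_monom[OF laurent_symb, of q 1 2] by simp

lemma laurent_symb_uminus: "l0 q \<Longrightarrow> laurent (\<lambda>z. symb q (- z))"
  using laurent_compose_monom[OF laurent_symb, of q "-1" 1] by simp

lemmas laurent_intros = laurent_const laurent_ident laurent_symb laurent_symb_square
  laurent_symb_uminus laurent_mult laurent_add laurent_diff laurent_uminus laurent_power

lemma support_fstar: "{k. fstar u k \<noteq> 0} = uminus ` {k. u k \<noteq> 0}"
  unfolding fstar_def by (force simp: image_iff)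

lemma l0_fstar: "l0 u \<Longrightarrow> l0 (fstar u)"
  unfolding l0_def support_fstar by simp

lemma symb_fstar: "symb (fstar u) z = cnj (symb u (inverse (cnj z)))"
proof -
  have "symb (fstar u) z = (\<Sum>k\<in>{k. u k \<noteq> 0}. fstar u (- k) * z powi (- k))"
    unfolding symb_def support_fstar by (subst sum.reindex) (auto intro: inj_onI)
  then show ?thesis
    unfolding symb_def fstar_def by (simp add: power_int_minus power_int_inverse)
qed

lemma symb_fstar_mult:
  assumes "\<forall>z. z \<noteq> 0 \<longrightarrow> symb u z = f z * symb v z" "z \<noteq> 0"
  shows "symb (fstar u) z = cnj (f (inverse (cnj z))) * symb (fstar v) z"
  using assms by (simp add: symb_fstar)

lemma support_interleave:
  "{k. interleave u0 u1 k \<noteq> 0} = (\<lambda>j. 2 * j) ` {j. u0 j \<noteq> 0} \<union> (\<lambda>j. 2 * j + 1) ` {j. u1 j \<noteq> 0}"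
proof (rule set_eqI)
  fix k
  show "k \<in> {k. interleave u0 u1 k \<noteq> 0} \<longleftrightarrow>
      k \<in> (\<lambda>j. 2 * j) ` {j. u0 j \<noteq> 0} \<union> (\<lambda>j. 2 * j + 1) ` {j. u1 j \<noteq> 0}"
    by (cases "even k") (auto simp: interleave_def elim!: evenE oddE, presburger+)
qed

lemma l0_interleave: "l0 u0 \<Longrightarrow> l0 u1 \<Longrightarrow> l0 (interleave u0 u1)"
  unfolding l0_def support_interleave by simp

lemma symb_interleave:
  assumes "l0 u0" "l0 u1" "z \<noteq> 0"
  shows "symb (interleave u0 u1) z = symb u0 (z ^ 2) + z * symb u1 (z ^ 2)"
proof -
  have "symb (interleave u0 u1) z
      = (\<Sum>k\<in>(\<lambda>j. 2 * j) ` {j. u0 j \<noteq> 0}. interleave u0 u1 k * z powi k)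
      + (\<Sum>k\<in>(\<lambda>j. 2 * j + 1) ` {j. u1 j \<noteq> 0}. interleave u0 u1 k * z powi k)"
    unfolding symb_def support_interleave
    by (rule sum.union_disjoint) (use assms in \<open>auto simp: l0_def, presburger\<close>)
  also have "\<dots> = symb u0 (z ^ 2) + z * symb u1 (z ^ 2)"
    unfolding symb_def using assms(3)
    by (simp add: sum.reindex inj_on_def interleave_def power_int_add power_int_power
        sum_distrib_left mult_ac)
  finally show ?thesis .
qed

lemma coset_interleave: "coset (interleave u0 u1) 0 = u0" "coset (interleave u0 u1) 1 = u1"
  unfolding coset_def interleave_def by auto

lemma interleave_coset: "interleave (coset u 0) (coset u 1) = u"
proof
  fix k
  show "interleave (coset u 0) (coset u 1) k = u k"
    by (cases "even k") (auto simp: coset_def interleave_def add.commute elim!: evenE oddE)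
qed

lemma l0_coset:
  assumes "l0 u"
  shows "l0 (coset u \<gamma>)"
proof -
  have "inj (\<lambda>k::int. \<gamma> + 2 * k)"
    by (rule injI) simp
  then have "finite ((\<lambda>k. \<gamma> + 2 * k) -` {k. u k \<noteq> 0})"
    using assms unfolding l0_def by (rule finite_vimageI[rotated])
  then show ?thesis
    by (simp add: l0_def coset_def vimage_def)
qed

lemma symb_polyphase:
  assumes "l0 u" "z \<noteq> 0"
  shows "symb u z = symb (coset u 0) (z ^ 2) + z * symb (coset u 1) (z ^ 2)"
  using symb_interleave[of "coset u 0" "coset u 1" z] assms
  by (simp add: l0_coset interleave_coset)

lemma symb_fstar_polyphase:
  assumes "l0 u" "z \<noteq> 0"
  shows "symb (fstar u) z = symb (fstar (coset u 0)) (z ^ 2) + inverse z * symb (fstar (coset u 1)) (z ^ 2)"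
  using assms symb_polyphase[OF assms(1), of "inverse (cnj z)"] by (simp add: symb_fstar power_inverse)

lemma symb_polyphase_uminus:
  assumes "l0 u" "z \<noteq> 0"
  shows "symb u (- z) = symb (coset u 0) (z ^ 2) - z * symb (coset u 1) (z ^ 2)"
    and "symb (fstar u) (- z) = symb (fstar (coset u 0)) (z ^ 2) - inverse z * symb (fstar (coset u 1)) (z ^ 2)"
  using symb_polyphase[OF assms(1), of "- z"] symb_fstar_polyphase[OF assms(1), of "- z"] assms(2)
  by simp_all

lemma symb_lquot:
  assumes "laurent g" "\<forall>z. z \<noteq> 0 \<longrightarrow> N z = d z * g z" "finite {z. d z = 0}"
  shows "l0 (lquot N d)" and "\<forall>z. z \<noteq> 0 \<longrightarrow> symb (lquot N d) z = g z"
proof -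
  obtain q where q: "l0 q" "\<forall>z. z \<noteq> 0 \<longrightarrow> g z = symb q z"
    using assms(1) unfolding laurent_def by blast
  have "lquot N d = q"
    unfolding lquot_def
  proof (rule the_equality)
    show "l0 q \<and> (\<forall>z. z \<noteq> 0 \<longrightarrow> N z = d z * symb q z)"
      using q assms(2) by simp
  next
    fix r assume r: "l0 r \<and> (\<forall>z. z \<noteq> 0 \<longrightarrow> N z = d z * symb r z)"
    show "r = q"
    proof (rule symb_inject_cofinite[OF _ q(1) assms(3)])
      show "l0 r" using r by blast
      fix z :: complex assume "z \<noteq> 0" "z \<notin> {z. d z = 0}"
      then show "symb r z = symb q z"
        using r q(2) assms(2) by auto
    qed
  qed
  with q show "l0 (lquot N d)" "\<forall>z. z \<noteq> 0 \<longrightarrow> symb (lquot N d) z = g z"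
    by simp_all
qed

lemma finite_zeros_Afilt_denom: "finite {z::complex. (1 - z) ^ n * (1 - inverse z) ^ n = 0}"
  by (rule finite_subset[of _ "{1}"]) auto

lemma finite_zeros_Bfilt_denom: "finite {z::complex. (1 - inverse z) ^ n * (1 + z) ^ n = 0}"
  by (rule finite_subset[of _ "{1, -1}"]) (auto simp: add_eq_0_iff)

lemma symb_Afilt:
  assumes "laurent g"
    and "\<forall>z. z \<noteq> 0 \<longrightarrow> symb \<Theta> z - symb \<Theta> (z^2) * symb (fstar a) z * symb a z
                          = (1 - z) ^ nb * (1 - inverse z) ^ nb * g z"
  shows "l0 (Afilt a \<Theta> nb)" and "\<forall>z. z \<noteq> 0 \<longrightarrow> symb (Afilt a \<Theta> nb) z = g z"
  using symb_lquot[OF assms finite_zeros_Afilt_denom] unfolding Afilt_def by simp_all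

lemma symb_Bfilt:
  assumes "laurent g"
    and "\<forall>z. z \<noteq> 0 \<longrightarrow> - symb \<Theta> (z^2) * symb (fstar a) z * symb a (- z)
                          = (1 - inverse z) ^ nb * (1 + z) ^ nb * g z"
  shows "l0 (Bfilt a \<Theta> nb)" and "\<forall>z. z \<noteq> 0 \<longrightarrow> symb (Bfilt a \<Theta> nb) z = g z"
  using symb_lquot[OF assms finite_zeros_Bfilt_denom] unfolding Bfilt_def by simp_all

lemma ldvd_pow_iff_laurent:
  "ldvd_pow c m f \<longleftrightarrow> (\<exists>g. laurent g \<and> (\<forall>z. z \<noteq> 0 \<longrightarrow> f z = (z - c) ^ m * g z))"
  unfolding ldvd_pow_def laurent_def by force

lemma ldvd_pow_mono:
  assumes "ldvd_pow c m f" "n \<le> m"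
  shows "ldvd_pow c n f"
proof -
  obtain g where g: "laurent g" "\<forall>z. z \<noteq> 0 \<longrightarrow> f z = (z - c) ^ m * g z"
    using assms(1) unfolding ldvd_pow_iff_laurent by blast
  have "f z = (z - c) ^ n * ((z - c) ^ (m - n) * g z)" if "z \<noteq> 0" for z
    using g(2) that assms(2) by (simp add: mult.assoc flip: power_add)
  moreover have "laurent (\<lambda>z. (z - c) ^ (m - n) * g z)"
    using g(1) by (intro laurent_intros)
  ultimately show ?thesis
    unfolding ldvd_pow_iff_laurent by blast
qed

lemma ldvd_pow_of_le_SUP:
  assumes "enat n \<le> (SUP m\<in>{m. ldvd_pow c m f}. enat m)" "0 < n"
  shows "ldvd_pow c n f"
proof -
  have "\<exists>m. ldvd_pow c m f \<and> n \<le> m"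
  proof (rule ccontr)
    assume "\<not> ?thesis"
    then have "(SUP m\<in>{m. ldvd_pow c m f}. enat m) \<le> enat (n - 1)"
      by (intro SUP_least) auto
    with assms show False
      by (metis diff_less enat_ord_simps(1) less_one not_le order_trans)
  qed
  then show ?thesis
    using ldvd_pow_mono by blast
qed

lemma vm_ge_of_factor:
  assumes "l0 bo" "\<forall>z. z \<noteq> 0 \<longrightarrow> symb b z = (1 - z) ^ n * symb bo z"
  shows "enat n \<le> vm (symb b)"
proof -
  have "symb b z = (z - 1) ^ n * ((-1) ^ n * symb bo z)" if "z \<noteq> 0" for z
    using assms(2) that by (simp add: mult.assoc flip: power_mult_distrib)
  moreover have "laurent (\<lambda>z. (-1) ^ n * symb bo z)"
    using assms(1) by (intro laurent_intros)
  ultimately have "ldvd_pow 1 n (symb b)"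
    unfolding ldvd_pow_iff_laurent by blast
  then show ?thesis
    unfolding vm_def by (intro SUP_upper) simp
qed

lemma ldvd_pow_double_factor:
  assumes "ldvd_pow 1 (2 * n) f"
  shows "\<exists>g. laurent g \<and> (\<forall>z. z \<noteq> 0 \<longrightarrow> f z = (1 - z) ^ n * (1 - inverse z) ^ n * g z)"
proof -
  obtain g where g: "laurent g" "\<forall>z. z \<noteq> 0 \<longrightarrow> f z = (z - 1) ^ (2 * n) * g z"
    using assms unfolding ldvd_pow_iff_laurent by blast
  have "f z = (1 - z) ^ n * (1 - inverse z) ^ n * ((- z) ^ n * g z)" if "z \<noteq> 0" for z
  proof -
    have "(1 - z) * (1 - inverse z) * (- z) = (z - 1) ^ 2"
      using that by (simp add: field_simps power2_eq_square)
    then have "(1 - z) ^ n * (1 - inverse z) ^ n * (- z) ^ n = (z - 1) ^ (2 * n)"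
      by (metis power_mult power_mult_distrib)
    then show ?thesis
      using g(2) that by (simp add: mult.assoc)
  qed
  moreover have "laurent (\<lambda>z. (- z) ^ n * g z)"
    using g(1) by (intro laurent_intros)
  ultimately show ?thesis by blast
qed

lemma fstar_mult_reflect_factor:
  assumes "ldvd_pow (-1) n (symb a)"
  shows "\<exists>g. laurent g \<and>
    (\<forall>z. z \<noteq> 0 \<longrightarrow> symb (fstar a) z * symb a (- z) = (1 - inverse z) ^ n * (1 + z) ^ n * g z)"
proof -
  obtain p where p: "l0 p" "\<forall>z. z \<noteq> 0 \<longrightarrow> symb a z = (z + 1) ^ n * symb p z"
    using assms unfolding ldvd_pow_def by auto
  have "symb (fstar a) z * symb a (- z)
      = (1 - inverse z) ^ n * (1 + z) ^ n * ((-1) ^ n * symb (fstar p) z * symb p (- z))"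
    if z: "z \<noteq> 0" for z
  proof -
    have "(inverse z + 1) * (1 - z) = - ((1 - inverse z) * (1 + z))"
      using z by (simp add: field_simps)
    then have "(inverse z + 1) ^ n * (1 - z) ^ n = (-1) ^ n * ((1 - inverse z) ^ n * (1 + z) ^ n)"
      by (metis power_mult_distrib mult_minus1)
    moreover have "symb (fstar a) z = (inverse z + 1) ^ n * symb (fstar p) z"
      using symb_fstar_mult[OF p(2) z] by simp
    moreover have "symb a (- z) = (1 - z) ^ n * symb p (- z)"
      using p(2) z by simp
    ultimately show ?thesis
      by (simp add: algebra_simps)
  qed
  moreover have "laurent (\<lambda>z. (-1) ^ n * symb (fstar p) z * symb p (- z))"
    using p(1) by (intro laurent_intros l0_fstar)
  ultimately show ?thesis by blast
qed

lemma polyphase_identities_iff: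
  fixes z :: complex
  assumes z: "z \<noteq> 0"
  shows "(A0 + z * A1 = (X0 + inverse z * X1) * (x0 + z * x1) - (Y0 + inverse z * Y1) * (y0 + z * y1) \<and>
          A0 - z * A1 = (X0 - inverse z * X1) * (x0 - z * x1) - (Y0 - inverse z * Y1) * (y0 - z * y1) \<and>
          B0 + z * B1 = (X0 + inverse z * X1) * (x0 - z * x1) - (Y0 + inverse z * Y1) * (y0 - z * y1) \<and>
          B0 - z * B1 = (X0 - inverse z * X1) * (x0 + z * x1) - (Y0 - inverse z * Y1) * (y0 + z * y1))
     \<longleftrightarrow> ((A0 + B0) / 2 = X0 * x0 - Y0 * y0 \<and> (A1 - B1) / 2 = X0 * x1 - Y0 * y1 \<and>
          z^2 * (A1 + B1) / 2 = X1 * x0 - Y1 * y0 \<and> (A0 - B0) / 2 = X1 * x1 - Y1 * y1)"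
    (is "?E \<longleftrightarrow> ?F")
proof -
  define P Q R S where "P = X0 * x0 - Y0 * y0" and "Q = X1 * x1 - Y1 * y1"
    and "R = X0 * x1 - Y0 * y1" and "S = X1 * x0 - Y1 * y0"
  define e1 e2 e3 e4 where "e1 = A0 + z * A1 - (P + Q + z * R + S / z)"
    and "e2 = A0 - z * A1 - (P + Q - z * R - S / z)"
    and "e3 = B0 + z * B1 - (P - Q - z * R + S / z)"
    and "e4 = B0 - z * B1 - (P - Q + z * R - S / z)"
  define f1 f2 f3 f4 where "f1 = (A0 + B0) / 2 - P" and "f2 = (A1 - B1) / 2 - R"
    and "f3 = z^2 * (A1 + B1) / 2 - S" and "f4 = (A0 - B0) / 2 - Q"
  have "(X0 + inverse z * X1) * (x0 + z * x1) - (Y0 + inverse z * Y1) * (y0 + z * y1) = P + Q + z * R + S / z"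
    "(X0 - inverse z * X1) * (x0 - z * x1) - (Y0 - inverse z * Y1) * (y0 - z * y1) = P + Q - z * R - S / z"
    "(X0 + inverse z * X1) * (x0 - z * x1) - (Y0 + inverse z * Y1) * (y0 - z * y1) = P - Q - z * R + S / z"
    "(X0 - inverse z * X1) * (x0 + z * x1) - (Y0 - inverse z * Y1) * (y0 + z * y1) = P - Q + z * R - S / z"
    unfolding P_def Q_def R_def S_def using z by (simp_all add: field_simps)
  then have E: "?E \<longleftrightarrow> e1 = 0 \<and> e2 = 0 \<and> e3 = 0 \<and> e4 = 0"
    unfolding e1_def e2_def e3_def e4_def right_minus_eq by simp
  have F: "?F \<longleftrightarrow> f1 = 0 \<and> f2 = 0 \<and> f3 = 0 \<and> f4 = 0"
    unfolding f1_def f2_def f3_def f4_def P_def Q_def R_def S_def by simp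
  have f_by_e: "f1 = (e1 + e2 + e3 + e4) / 4" "f2 = (e1 - e2 - e3 + e4) / (4 * z)"
    "f3 = z * (e1 - e2 + e3 - e4) / 4" "f4 = (e1 + e2 - e3 - e4) / 4"
    unfolding e1_def e2_def e3_def e4_def f1_def f2_def f3_def f4_def
    using z by (simp_all add: field_simps power2_eq_square)
  have e_by_f: "e1 = f1 + f4 + z * f2 + f3 / z" "e2 = f1 + f4 - z * f2 - f3 / z"
    "e3 = f1 - f4 - z * f2 + f3 / z" "e4 = f1 - f4 + z * f2 - f3 / z"
    unfolding e1_def e2_def e3_def e4_def f1_def f2_def f3_def f4_def
    using z by (simp_all add: field_simps power2_eq_square)
  show ?thesis
    unfolding E F
  proof
    assume "e1 = 0 \<and> e2 = 0 \<and> e3 = 0 \<and> e4 = 0"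
    with f_by_e show "f1 = 0 \<and> f2 = 0 \<and> f3 = 0 \<and> f4 = 0" by simp
  next
    assume "f1 = 0 \<and> f2 = 0 \<and> f3 = 0 \<and> f4 = 0"
    with e_by_f show "e1 = 0 \<and> e2 = 0 \<and> e3 = 0 \<and> e4 = 0" by simp
  qed
qed

definition signed_prod :: "filt \<Rightarrow> filt \<Rightarrow> complex \<Rightarrow> complex \<Rightarrow> complex" where
  "signed_prod u1 u2 z s = symb (fstar u1) z * symb u1 s - symb (fstar u2) z * symb u2 s"

definition signed_gram :: "(nat \<Rightarrow> nat \<Rightarrow> filt) \<Rightarrow> nat \<Rightarrow> nat \<Rightarrow> complex \<Rightarrow> complex" where
  "signed_gram V i j z = symb (fstar (V 1 i)) z * symb (V 1 j) z - symb (fstar (V 2 i)) z * symb (V 2 j) z"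

definition polyphase_mat :: "filt \<Rightarrow> filt \<Rightarrow> nat \<Rightarrow> nat \<Rightarrow> complex \<Rightarrow> complex" where
  "polyphase_mat A B i j z =
     (if i = 1 \<and> j = 1 then (symb (coset A 0) z + symb (coset B 0) z) / 2
      else if i = 1 \<and> j = 2 then (symb (coset A 1) z - symb (coset B 1) z) / 2
      else if i = 2 \<and> j = 1 then z * (symb (coset A 1) z + symb (coset B 1) z) / 2
      else (symb (coset A 0) z - symb (coset B 0) z) / 2)"

definition coset_mat :: "filt \<Rightarrow> filt \<Rightarrow> nat \<Rightarrow> nat \<Rightarrow> filt" where
  "coset_mat u1 u2 = (\<lambda>i j. if i = 1 then (if j = 1 then coset u1 0 else coset u1 1)
                             else (if j = 1 then coset u2 0 else coset u2 1))"

lemma N_factor_iff_polyphase_mat: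
  "N_factor a \<Theta> nb V \<longleftrightarrow> (\<forall>w. w \<noteq> 0 \<longrightarrow> (\<forall>i\<in>{1,2}. \<forall>j\<in>{1,2}.
     polyphase_mat (Afilt a \<Theta> nb) (Bfilt a \<Theta> nb) i j w = signed_gram V i j w))"
  unfolding N_factor_def Nmat_def polyphase_mat_def signed_gram_def Let_def ..

lemma polyphase_mat_square_iff:
  assumes "l0 A" "l0 B" "l0 u1" "l0 u2" and z: "z \<noteq> 0"
  shows "(\<forall>i\<in>{1,2}. \<forall>j\<in>{1,2}. polyphase_mat A B i j (z^2) = signed_gram (coset_mat u1 u2) i j (z^2))
    \<longleftrightarrow> symb A z = signed_prod u1 u2 z z \<and> symb A (- z) = signed_prod u1 u2 (- z) (- z) \<and>
        symb B z = signed_prod u1 u2 z (- z) \<and> symb B (- z) = signed_prod u1 u2 (- z) z"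
proof -
  note at_z = assms(1-4)[THEN symb_polyphase, OF z] assms(3,4)[THEN symb_fstar_polyphase, OF z]
  note at_mz = assms(1-4)[THEN symb_polyphase_uminus(1), OF z] assms(3,4)[THEN symb_polyphase_uminus(2), OF z]
  have entries: "(\<forall>i\<in>{1,2}. \<forall>j\<in>{1,2}. polyphase_mat A B i j w = signed_gram (coset_mat u1 u2) i j w) \<longleftrightarrow>
      (symb (coset A 0) w + symb (coset B 0) w) / 2
        = symb (fstar (coset u1 0)) w * symb (coset u1 0) w - symb (fstar (coset u2 0)) w * symb (coset u2 0) w \<and>
      (symb (coset A 1) w - symb (coset B 1) w) / 2
        = symb (fstar (coset u1 0)) w * symb (coset u1 1) w - symb (fstar (coset u2 0)) w * symb (coset u2 1) w \<and>
      w * (symb (coset A 1) w + symb (coset B 1) w) / 2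
        = symb (fstar (coset u1 1)) w * symb (coset u1 0) w - symb (fstar (coset u2 1)) w * symb (coset u2 0) w \<and>
      (symb (coset A 0) w - symb (coset B 0) w) / 2
        = symb (fstar (coset u1 1)) w * symb (coset u1 1) w - symb (fstar (coset u2 1)) w * symb (coset u2 1) w"
    for w
    by (simp add: polyphase_mat_def signed_gram_def coset_mat_def)
  show ?thesis
    unfolding entries signed_prod_def at_z at_mz by (rule polyphase_identities_iff[OF z, symmetric])
qed

lemma polyphase_mat_factor_iff:
  assumes "l0 A" "l0 B" "l0 u1" "l0 u2"
  shows "(\<forall>w. w \<noteq> 0 \<longrightarrow> (\<forall>i\<in>{1,2}. \<forall>j\<in>{1,2}.
            polyphase_mat A B i j w = signed_gram (coset_mat u1 u2) i j w))
    \<longleftrightarrow> (\<forall>z. z \<noteq> 0 \<longrightarrow> symb A z = signed_prod u1 u2 z z \<and> symb B z = signed_prod u1 u2 z (- z))"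
    (is "(\<forall>w. w \<noteq> 0 \<longrightarrow> ?N w) \<longleftrightarrow> (\<forall>z. z \<noteq> 0 \<longrightarrow> ?AB z)")
proof (intro iffI allI impI)
  fix z :: complex
  assume "\<forall>w. w \<noteq> 0 \<longrightarrow> ?N w" and z: "z \<noteq> 0"
  then have "?N (z^2)" by simp
  with polyphase_mat_square_iff[OF assms z] show "?AB z" by blast
next
  fix w :: complex
  assume AB: "\<forall>z. z \<noteq> 0 \<longrightarrow> ?AB z" and "w \<noteq> 0"
  then have z: "csqrt w \<noteq> 0" and w: "w = (csqrt w)^2" by simp_all
  have "?AB (csqrt w)" "?AB (- csqrt w)"
    using AB z by simp_all
  with polyphase_mat_square_iff[OF assms z] have "?N ((csqrt w)^2)" by simp
  with w show "?N w" by simp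
qed

lemma signed_prod_factor:
  assumes "\<forall>z. z \<noteq> 0 \<longrightarrow> symb b1 z = (1 - z) ^ n * symb bo1 z \<and> symb b2 z = (1 - z) ^ n * symb bo2 z"
    and "z \<noteq> 0" "s \<noteq> 0"
  shows "signed_prod b1 b2 z s = (1 - inverse z) ^ n * (1 - s) ^ n * signed_prod bo1 bo2 z s"
proof -
  have "symb (fstar b1) z = (1 - inverse z) ^ n * symb (fstar bo1) z"
    "symb (fstar b2) z = (1 - inverse z) ^ n * symb (fstar bo2) z"
    using symb_fstar_mult[of b1 "\<lambda>z. (1 - z) ^ n" bo1 z] symb_fstar_mult[of b2 "\<lambda>z. (1 - z) ^ n" bo2 z] assms
    by simp_all
  with assms show ?thesis
    unfolding signed_prod_def by (simp add: algebra_simps)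
qed

lemma laurent_signed_prod:
  assumes "l0 u1" "l0 u2"
  shows "laurent (\<lambda>z. signed_prod u1 u2 z z)" "laurent (\<lambda>z. signed_prod u1 u2 z (- z))"
  unfolding signed_prod_def by (intro laurent_intros l0_fstar assms)+

lemma qtfb_iff_signed_prod:
  "qtfb \<Theta> a b1 b2 \<longleftrightarrow> (\<forall>z. z \<noteq> 0 \<longrightarrow>
     symb \<Theta> z - symb \<Theta> (z^2) * symb (fstar a) z * symb a z = signed_prod b1 b2 z z \<and>
     - symb \<Theta> (z^2) * symb (fstar a) z * symb a (- z) = signed_prod b1 b2 z (- z))"
  unfolding qtfb_def signed_prod_def by (auto simp: algebra_simps)

lemma N_factor_cong:
  assumes "\<And>i j. i \<in> {1,2} \<Longrightarrow> j \<in> {1,2} \<Longrightarrow> V i j = W i j"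
  shows "N_factor a \<Theta> nb V \<longleftrightarrow> N_factor a \<Theta> nb W"
  unfolding N_factor_def using assms by simp

lemma coset_mat_interleave:
  "i \<in> {1,2} \<Longrightarrow> j \<in> {1,2} \<Longrightarrow>
    coset_mat (interleave (V 1 1) (V 1 2)) (interleave (V 2 1) (V 2 2)) i j = V i j"
  unfolding coset_mat_def coset_interleave by auto

lemma qtfb_imp_N_factor:
  assumes "qtfb \<Theta> a b1 b2" "l0 bo1" "l0 bo2"
    and "\<forall>z. z \<noteq> 0 \<longrightarrow> symb b1 z = (1 - z) ^ nb * symb bo1 z \<and> symb b2 z = (1 - z) ^ nb * symb bo2 z"
  shows "N_factor a \<Theta> nb (coset_mat bo1 bo2)"
proof -
  have "\<forall>z. z \<noteq> 0 \<longrightarrow> symb \<Theta> z - symb \<Theta> (z^2) * symb (fstar a) z * symb a z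
                      = (1 - z) ^ nb * (1 - inverse z) ^ nb * signed_prod bo1 bo2 z z"
    using assms(1,4) signed_prod_factor[OF assms(4)] by (simp add: qtfb_iff_signed_prod mult_ac)
  note A = symb_Afilt[OF laurent_signed_prod(1)[OF assms(2,3)] this]
  have "\<forall>z. z \<noteq> 0 \<longrightarrow> - symb \<Theta> (z^2) * symb (fstar a) z * symb a (- z)
                      = (1 - inverse z) ^ nb * (1 + z) ^ nb * signed_prod bo1 bo2 z (- z)"
    using assms(1,4) signed_prod_factor[OF assms(4)] by (simp add: qtfb_iff_signed_prod)
  note B = symb_Bfilt[OF laurent_signed_prod(2)[OF assms(2,3)] this]
  show ?thesis
    unfolding N_factor_iff_polyphase_mat polyphase_mat_factor_iff[OF A(1) B(1) assms(2,3)]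
    using A(2) B(2) by blast
qed

lemma N_factor_imp_qtfb:
  assumes "l0 a" "l0 \<Theta>" "0 < nb" "enat nb \<le> sr (symb a)"
    and "enat (2 * nb) \<le> vm (\<lambda>z. symb \<Theta> z - symb \<Theta> (z^2) * symb (fstar a) z * symb a z)"
    and "l0 bo1" "l0 bo2" "N_factor a \<Theta> nb (coset_mat bo1 bo2)"
    and b: "\<forall>z. z \<noteq> 0 \<longrightarrow> symb b1 z = (1 - z) ^ nb * symb bo1 z \<and> symb b2 z = (1 - z) ^ nb * symb bo2 z"
  shows "qtfb \<Theta> a b1 b2"
proof -
  have "ldvd_pow 1 (2 * nb) (\<lambda>z. symb \<Theta> z - symb \<Theta> (z^2) * symb (fstar a) z * symb a z)"
    using assms(3,5) unfolding vm_def by (intro ldvd_pow_of_le_SUP) simp_all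
  then obtain gA where gA: "laurent gA"
    "\<forall>z. z \<noteq> 0 \<longrightarrow> symb \<Theta> z - symb \<Theta> (z^2) * symb (fstar a) z * symb a z
                      = (1 - z) ^ nb * (1 - inverse z) ^ nb * gA z"
    by (blast dest: ldvd_pow_double_factor)
  note A = symb_Afilt[OF gA]
  have "ldvd_pow (-1) nb (symb a)"
    using assms(3,4) unfolding sr_def by (intro ldvd_pow_of_le_SUP)
  then obtain g where "laurent g" and g: "\<forall>z. z \<noteq> 0 \<longrightarrow> symb (fstar a) z * symb a (- z)
                      = (1 - inverse z) ^ nb * (1 + z) ^ nb * g z"
    using fstar_mult_reflect_factor by blast
  define gB where "gB z = - symb \<Theta> (z^2) * g z" for z
  have "laurent gB"
    unfolding gB_def using \<open>laurent g\<close> assms(2) by (intro laurent_intros)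
  have gB: "\<forall>z. z \<noteq> 0 \<longrightarrow> - symb \<Theta> (z^2) * symb (fstar a) z * symb a (- z)
                      = (1 - inverse z) ^ nb * (1 + z) ^ nb * gB z"
    using g by (simp add: gB_def algebra_simps)
  note B = symb_Bfilt[OF \<open>laurent gB\<close> gB]
  have AB: "\<forall>z. z \<noteq> 0 \<longrightarrow> symb (Afilt a \<Theta> nb) z = signed_prod bo1 bo2 z z
                      \<and> symb (Bfilt a \<Theta> nb) z = signed_prod bo1 bo2 z (- z)"
    using assms(8) unfolding N_factor_iff_polyphase_mat polyphase_mat_factor_iff[OF A(1) B(1) assms(6,7)] .
  show ?thesis
    unfolding qtfb_iff_signed_prod
  proof (intro allI impI conjI)
    fix z :: complex assume z: "z \<noteq> 0"
    then have mz: "- z \<noteq> 0" by simp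
    show "symb \<Theta> z - symb \<Theta> (z^2) * symb (fstar a) z * symb a z = signed_prod b1 b2 z z"
      using gA(2) A(2) AB signed_prod_factor[OF b z z] z by (simp add: mult_ac)
    show "- symb \<Theta> (z^2) * symb (fstar a) z * symb a (- z) = signed_prod b1 b2 z (- z)"
      using gB B(2) AB signed_prod_factor[OF b z mz] z by simp
  qed
qed

theorem theorem4p1:
  fixes a \<Theta> :: filt and nb :: nat
  assumes "l0 a" and "l0 \<Theta>" and "fstar \<Theta> = \<Theta>" and "0 < nb"
    and "enat nb \<le> sr (symb a)"
    and "enat (2 * nb) \<le> vm (\<lambda>z. symb \<Theta> z - symb \<Theta> (z^2) * symb (fstar a) z * symb a z)"
  shows
   "(\<forall>b1 b2. l0 b1 \<and> l0 b2 \<and> qtfb \<Theta> a b1 b2 \<and> enat nb \<le> vm (symb b1) \<and> enat nb \<le> vm (symb b2)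
      \<longrightarrow> (\<forall>bo1 bo2. l0 bo1 \<and> l0 bo2 \<and>
             (\<forall>z. z \<noteq> 0 \<longrightarrow> symb b1 z = (1 - z) ^ nb * symb bo1 z \<and> symb b2 z = (1 - z) ^ nb * symb bo2 z)
           \<longrightarrow> N_factor a \<Theta> nb
                 (\<lambda>i j. if i = 1 then (if j = 1 then coset bo1 0 else coset bo1 1)
                        else (if j = 1 then coset bo2 0 else coset bo2 1))))
    \<and> (\<forall>V. (\<forall>i\<in>{1,2}. \<forall>j\<in>{1,2}. l0 (V i j)) \<and> N_factor a \<Theta> nb V
      \<longrightarrow> (\<forall>b1 b2. l0 b1 \<and> l0 b2 \<and>
             (\<forall>z. z \<noteq> 0 \<longrightarrow> symb b1 z = (1 - z) ^ nb * symb (interleave (V 1 1) (V 1 2)) z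
                            \<and> symb b2 z = (1 - z) ^ nb * symb (interleave (V 2 1) (V 2 2)) z)
           \<longrightarrow> qtfb \<Theta> a b1 b2 \<and> enat nb \<le> vm (symb b1) \<and> enat nb \<le> vm (symb b2)))"
proof (rule conjI; intro allI impI)
  fix b1 b2 bo1 bo2
  assume b: "l0 b1 \<and> l0 b2 \<and> qtfb \<Theta> a b1 b2 \<and> enat nb \<le> vm (symb b1) \<and> enat nb \<le> vm (symb b2)"
    and bo: "l0 bo1 \<and> l0 bo2 \<and>
      (\<forall>z. z \<noteq> 0 \<longrightarrow> symb b1 z = (1 - z) ^ nb * symb bo1 z \<and> symb b2 z = (1 - z) ^ nb * symb bo2 z)"
  have "N_factor a \<Theta> nb (coset_mat bo1 bo2)"
    using b bo by (intro qtfb_imp_N_factor[of \<Theta> a b1 b2]) blast+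
  then show "N_factor a \<Theta> nb
                 (\<lambda>i j. if i = 1 then (if j = 1 then coset bo1 0 else coset bo1 1)
                        else (if j = 1 then coset bo2 0 else coset bo2 1))"
    unfolding coset_mat_def .
next
  fix V :: "nat \<Rightarrow> nat \<Rightarrow> filt" and b1 b2 :: filt
  assume V: "(\<forall>i\<in>{1,2}. \<forall>j\<in>{1,2}. l0 (V i j)) \<and> N_factor a \<Theta> nb V"
    and b: "l0 b1 \<and> l0 b2 \<and>
      (\<forall>z. z \<noteq> 0 \<longrightarrow> symb b1 z = (1 - z) ^ nb * symb (interleave (V 1 1) (V 1 2)) z
                     \<and> symb b2 z = (1 - z) ^ nb * symb (interleave (V 2 1) (V 2 2)) z)"
  define bo1 bo2 where "bo1 = interleave (V 1 1) (V 1 2)" and "bo2 = interleave (V 2 1) (V 2 2)"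
  have bo: "l0 bo1" "l0 bo2"
    using V unfolding bo1_def bo2_def by (simp_all add: l0_interleave)
  have "N_factor a \<Theta> nb (coset_mat bo1 bo2) \<longleftrightarrow> N_factor a \<Theta> nb V"
    unfolding bo1_def bo2_def by (rule N_factor_cong) (rule coset_mat_interleave)
  with V have "N_factor a \<Theta> nb (coset_mat bo1 bo2)"
    by blast
  moreover have factor: "\<forall>z. z \<noteq> 0 \<longrightarrow> symb b1 z = (1 - z) ^ nb * symb bo1 z \<and> symb b2 z = (1 - z) ^ nb * symb bo2 z"
    using b unfolding bo1_def bo2_def by blast
  ultimately have "qtfb \<Theta> a b1 b2"
    by (rule N_factor_imp_qtfb[OF assms(1,2,4-6) bo])
  moreover have "enat nb \<le> vm (symb b1)" "enat nb \<le> vm (symb b2)"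
    using factor by (simp_all add: vm_ge_of_factor[OF bo(1)] vm_ge_of_factor[OF bo(2)])
  ultimately show "qtfb \<Theta> a b1 b2 \<and> enat nb \<le> vm (symb b1) \<and> enat nb \<le> vm (symb b2)"
    by blast
qed

end
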